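(* Let $(S,+)$ be a commutative cancellative semigroup with no identity element such that its difference group $S-S$ carries a multiplication $\cdot$ making $(S-S,+,\cdot)$ an integral domain. Let $j\in\mathbb{N}$, let $R$ be a nonempty finite set of integral polynomials on $(S-S)^j$, let $A$ be a piecewise syndetic subset of $S$, and let $\langle\vec y_n\rangle_{n=1}^\infty$ be a sequence in $S^j$. Then there exist $a\in S$ and a nonempty finite set $H\subseteq\mathbb{N}$ such that $a+f\big(\sum_{n\in H}\vec y_n\big)\in A$ for every $f\in R$.
   Context: The difference group of a commutative cancellative semigroup $S$ is the abelian group $S-S=\{a-b: a,b\in S\}$, where $a-b$ is the element with $(a-b)+b=a$; $S$ is regarded as a subset of $S-S$, and $S^j\subseteq(S-S)^j$ with coordinatewise addition. An integral polynomial on $(S-S)^j$ is a polynomial function $(S-S)^j\to S-S$ in $j$ variables with coefficients in $S-S$ and zero constant term. For $t\in S$ and $A\subseteq S$, $-t+A=\{s\in S: t+s\in A\}$. A set $A\subseteq S$ is piecewise syndetic if there is a finite $G\subseteq S$ such that for every finite $F\subseteq S$ there is $x\in S$ with $F+x\subseteq\bigcup_{t\in G}(-t+A)$. $\mathbb{N}=\{1,2,\dots\}$. *)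

theory Defs
  imports Main
begin

text \<open>The semigroup S is modelled as a subset of an integral domain type 'a which
  plays the role of the difference group S - S (with its ring structure).
  Vectors in (S-S)^j are functions nat => 'a, of which only coordinates i < j matter.\<close>

definition comm_semigroup_no_identity :: "'a::idom set \<Rightarrow> bool" where
  "comm_semigroup_no_identity S \<longleftrightarrow>
     (\<forall>a\<in>S. \<forall>b\<in>S. a + b \<in> S) \<and>
     \<not> (\<exists>e\<in>S. \<forall>s\<in>S. e + s = s \<and> s + e = s)"

definition difference_group :: "'a::ab_group_add set \<Rightarrow> 'a set" where
  "difference_group S = {a - b | a b. a \<in> S \<and> b \<in> S}"

definition integral_poly :: "nat \<Rightarrow> ((nat \<Rightarrow> 'a::comm_ring_1) \<Rightarrow> 'a) \<Rightarrow> bool" where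
  "integral_poly j f \<longleftrightarrow>
     (\<exists>E c. finite E \<and>
        (\<forall>e\<in>E. (\<forall>i\<ge>j. e i = (0::nat)) \<and> e \<noteq> (\<lambda>_. 0)) \<and>
        (\<forall>x. f x = (\<Sum>e\<in>E. c e * (\<Prod>i<j. x i ^ e i))))"

definition left_translate_inv :: "'a::plus set \<Rightarrow> 'a \<Rightarrow> 'a set \<Rightarrow> 'a set" where
  "left_translate_inv S t A = {s \<in> S. t + s \<in> A}"

definition piecewise_syndetic :: "'a::plus set \<Rightarrow> 'a set \<Rightarrow> bool" where
  "piecewise_syndetic S A \<longleftrightarrow>
     (\<exists>G. finite G \<and> G \<subseteq> S \<and>
        (\<forall>F. finite F \<and> F \<subseteq> S \<longrightarrow>
           (\<exists>x\<in>S. (\<lambda>f. f + x) ` F \<subseteq> (\<Union>t\<in>G. left_translate_inv S t A))))"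

end

(* Bergelson's PET induction, run in the abelian group S - S. Polynomials enter only through their
   degree in the sense of iterated differences; the ring structure is needed just to see that
   integral polynomials have finite degree and vanish at 0.

   For a finite family P of such maps and every finite colouring there are a and a nonempty finite
   H with a + p (sum of the y n over H) of the colour of a for all p in P, all inside a finite window
   W fixed in advance. Choosing p1 in P of minimal degree, the derived maps
   p (h + x) - p x - p1 h have smaller PET weight. Colouring u by the colour pattern of u + W, the
   derived family adds a block to any focused configuration: s blocks whose configurations are
   monochromatic in s distinct colours, all different from the colour of a. With s the number of
   colours this is impossible, so a monochromatic configuration appears.

   Piecewise syndeticity colours a finite window, moved into S by a translation, with boundedly many
   colours such that every colour class has a translate inside A. *)

theory Submission
  imports Defs "HOL-Library.Function_Algebras" "HOL-Library.Multiset_Order" "HOL-Library.FuncSet"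
begin

section \<open>Polynomial maps between abelian groups\<close>

fun poly_deg_le :: "nat \<Rightarrow> ('v::ab_group_add \<Rightarrow> 'a::ab_group_add) \<Rightarrow> bool" where
  "poly_deg_le 0 f \<longleftrightarrow> (\<forall>u v. f u = f v)"
| "poly_deg_le (Suc d) f \<longleftrightarrow> (\<forall>x. poly_deg_le d (\<lambda>h. f (h + x) - f h))"

lemma poly_deg_le_const: "poly_deg_le d (\<lambda>_. c)"
  by (induction d arbitrary: c) auto

lemma poly_deg_le_add:
  "poly_deg_le d f \<Longrightarrow> poly_deg_le d g \<Longrightarrow> poly_deg_le d (\<lambda>h. f h + g h)"
proof (induction d arbitrary: f g)
  case 0
  then show ?case by simp metis
next
  case (Suc d)
  show ?case
  proof (simp only: poly_deg_le.simps, intro allI)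
    fix x
    have "(\<lambda>h. f (h + x) + g (h + x) - (f h + g h)) = (\<lambda>h. (f (h + x) - f h) + (g (h + x) - g h))"
      by (simp add: fun_eq_iff algebra_simps)
    then show "poly_deg_le d (\<lambda>h. f (h + x) + g (h + x) - (f h + g h))"
      using Suc by simp
  qed
qed

lemma poly_deg_le_uminus: "poly_deg_le d f \<Longrightarrow> poly_deg_le d (\<lambda>h. - f h)"
proof (induction d arbitrary: f)
  case (Suc d)
  show ?case
  proof (simp only: poly_deg_le.simps, intro allI)
    fix x
    have "(\<lambda>h. - f (h + x) - - f h) = (\<lambda>h. - (f (h + x) - f h))"
      by (simp add: fun_eq_iff)
    moreover have "poly_deg_le d (\<lambda>h. f (h + x) - f h)"
      using Suc.prems by simp
    ultimately show "poly_deg_le d (\<lambda>h. - f (h + x) - - f h)"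
      using Suc.IH by metis
  qed
qed auto

lemma poly_deg_le_diff:
  "poly_deg_le d f \<Longrightarrow> poly_deg_le d g \<Longrightarrow> poly_deg_le d (\<lambda>h. f h - g h)"
  using poly_deg_le_add[of d f "\<lambda>h. - g h"] poly_deg_le_uminus[of d g] by simp

lemma poly_deg_le_Suc: "poly_deg_le d f \<Longrightarrow> poly_deg_le (Suc d) f"
proof (induction d arbitrary: f)
  case 0
  then show ?case by simp metis
qed auto

lemma poly_deg_le_mono:
  assumes "poly_deg_le d f" and "d \<le> d'"
  shows "poly_deg_le d' f"
  using assms(2,1) by (induction rule: dec_induct) (auto intro: poly_deg_le_Suc simp del: poly_deg_le.simps(2))

lemma poly_deg_le_shift: "poly_deg_le d f \<Longrightarrow> poly_deg_le d (\<lambda>h. f (h + x))"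
proof (induction d arbitrary: f)
  case (Suc d)
  show ?case
  proof (simp only: poly_deg_le.simps, intro allI)
    fix y
    have "poly_deg_le d (\<lambda>h. f (h + y) - f h)"
      using Suc.prems by simp
    then have "poly_deg_le d (\<lambda>h. f (h + x + y) - f (h + x))"
      using Suc.IH by blast
    then show "poly_deg_le d (\<lambda>h. f (h + y + x) - f (h + x))"
      by (simp add: algebra_simps)
  qed
qed auto

lemma poly_deg_le_difference:
  assumes "poly_deg_le d f"
  shows "poly_deg_le (d - 1) (\<lambda>h. f (h + x) - f h)"
proof (cases d)
  case 0
  then have "(\<lambda>h. f (h + x) - f h) = (\<lambda>_. 0)"
    using assms by (metis poly_deg_le.simps(1) diff_self)
  then show ?thesis by (simp add: poly_deg_le_const)
qed (use assms in auto)

lemma poly_deg_le_cmult: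
  "poly_deg_le d g \<Longrightarrow> poly_deg_le d (\<lambda>h. (c::'a::comm_ring) * g h)"
proof (induction d arbitrary: g)
  case 0
  then show ?case by simp metis
next
  case (Suc d)
  show ?case
  proof (simp only: poly_deg_le.simps, intro allI)
    fix x
    have "(\<lambda>h. c * g (h + x) - c * g h) = (\<lambda>h. c * (g (h + x) - g h))"
      by (simp add: algebra_simps)
    then show "poly_deg_le d (\<lambda>h. c * g (h + x) - c * g h)"
      using Suc by simp
  qed
qed

lemma poly_deg_le_mult:
  fixes f g :: "'v::ab_group_add \<Rightarrow> 'a::comm_ring"
  assumes "poly_deg_le m f" and "poly_deg_le n g"
  shows "poly_deg_le (m + n) (\<lambda>h. f h * g h)"
  using assms
proof (induction "m + n" arbitrary: m n f g)
  case 0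
  then show ?case by simp metis
next
  case (Suc k)
  show ?case
  proof (cases m)
    case 0
    then have "(\<lambda>h. f h * g h) = (\<lambda>h. f 0 * g h)"
      using Suc.prems(1) by (metis poly_deg_le.simps(1))
    then show ?thesis using poly_deg_le_cmult[OF Suc.prems(2)] 0 by simp
  next
    case m: (Suc m')
    show ?thesis
    proof (cases n)
      case 0
      then have "(\<lambda>h. f h * g h) = (\<lambda>h. g 0 * f h)"
        using Suc.prems(2) by (metis poly_deg_le.simps(1) mult.commute)
      then show ?thesis using poly_deg_le_cmult[OF Suc.prems(1)] 0 by simp
    next
      case n: (Suc n')
      have "poly_deg_le k (\<lambda>h. f (h + x) * g (h + x) - f h * g h)" for x
      proof -
        have "poly_deg_le m' (\<lambda>h. f (h + x) - f h)"
          using Suc.prems(1) m by simp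
        from Suc.hyps(1)[OF _ this poly_deg_le_shift[OF Suc.prems(2)]]
        have left: "poly_deg_le k (\<lambda>h. (f (h + x) - f h) * g (h + x))"
          using Suc.hyps(2) m by simp
        have "poly_deg_le n' (\<lambda>h. g (h + x) - g h)"
          using Suc.prems(2) n by simp
        from Suc.hyps(1)[OF _ Suc.prems(1) this]
        have right: "poly_deg_le k (\<lambda>h. f h * (g (h + x) - g h))"
          using Suc.hyps(2) n by simp
        have "(\<lambda>h. (f (h + x) - f h) * g (h + x) + f h * (g (h + x) - g h))
            = (\<lambda>h. f (h + x) * g (h + x) - f h * g h)"
          by (simp add: algebra_simps)
        then show ?thesis using poly_deg_le_add[OF left right] by simp
      qed
      then show ?thesis by (simp flip: Suc.hyps(2))
    qed
  qed
qed

lemma poly_deg_le_power_coord: "poly_deg_le k (\<lambda>h::nat \<Rightarrow> 'a::comm_ring_1. h i ^ k)"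
proof (induction k)
  case (Suc k)
  have "poly_deg_le (Suc 0) (\<lambda>h::nat \<Rightarrow> 'a. h i)"
    by simp
  from poly_deg_le_mult[OF this Suc.IH] show ?case by simp
qed (simp add: poly_deg_le_const)

lemma poly_deg_le_monomial:
  "finite I \<Longrightarrow> poly_deg_le (\<Sum>i\<in>I. e i) (\<lambda>h::nat \<Rightarrow> 'a::comm_ring_1. \<Prod>i\<in>I. h i ^ e i)"
proof (induction I rule: finite_induct)
  case (insert i I)
  from poly_deg_le_mult[OF poly_deg_le_power_coord[of "e i" i] insert.IH] show ?case
    using insert.hyps by simp
qed (simp add: poly_deg_le_const)

lemma poly_deg_le_sum:
  "finite E \<Longrightarrow> (\<And>e. e \<in> E \<Longrightarrow> poly_deg_le d (t e)) \<Longrightarrow> poly_deg_le d (\<lambda>h. \<Sum>e\<in>E. t e h)"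
proof (induction E rule: finite_induct)
  case (insert e E)
  then show ?case using poly_deg_le_add[of d "t e" "\<lambda>h. \<Sum>e\<in>E. t e h"] by simp
qed (simp add: poly_deg_le_const)

definition polynomial_map :: "('v::ab_group_add \<Rightarrow> 'a::ab_group_add) \<Rightarrow> bool" where
  "polynomial_map f \<longleftrightarrow> (\<exists>d. poly_deg_le d f)"

definition poly_deg :: "('v::ab_group_add \<Rightarrow> 'a::ab_group_add) \<Rightarrow> nat" where
  "poly_deg f = (LEAST d. poly_deg_le d f)"

lemma poly_deg_le_iff: "polynomial_map f \<Longrightarrow> poly_deg_le d f \<longleftrightarrow> poly_deg f \<le> d"
proof
  assume "poly_deg_le d f"
  then show "poly_deg f \<le> d" unfolding poly_deg_def by (rule Least_le)
next
  assume "polynomial_map f" "poly_deg f \<le> d"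
  then have "poly_deg_le (poly_deg f) f"
    unfolding polynomial_map_def poly_deg_def by (auto intro: LeastI_ex)
  then show "poly_deg_le d f" using \<open>poly_deg f \<le> d\<close> poly_deg_le_mono by blast
qed

lemma poly_deg_le_poly_deg: "polynomial_map f \<Longrightarrow> poly_deg_le (poly_deg f) f"
  using poly_deg_le_iff by blast

lemma poly_deg_pos:
  assumes "polynomial_map p" "p 0 = 0" "p \<noteq> 0"
  shows "poly_deg p \<ge> 1"
proof (rule ccontr)
  assume "\<not> poly_deg p \<ge> 1"
  then have "poly_deg_le 0 p" using poly_deg_le_iff[OF assms(1)] by simp
  then have "p x = 0" for x
    using assms(2) by (metis poly_deg_le.simps(1))
  then show False using assms(3) by (simp add: fun_eq_iff)
qed

lemma integral_poly_polynomial_map: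
  fixes f :: "(nat \<Rightarrow> 'a::comm_ring_1) \<Rightarrow> 'a"
  assumes "integral_poly j f"
  shows "polynomial_map f" and "f 0 = 0"
proof -
  obtain E c where E: "finite E" "\<forall>e\<in>E. (\<forall>i\<ge>j. e i = 0) \<and> e \<noteq> (\<lambda>_. 0)"
    and "\<forall>x. f x = (\<Sum>e\<in>E. c e * (\<Prod>i<j. x i ^ e i))"
    using assms unfolding integral_poly_def by blast
  then have f: "f = (\<lambda>h. \<Sum>e\<in>E. c e * (\<Prod>i<j. h i ^ e i))"
    by blast
  define D where "D = (\<Sum>e\<in>E. \<Sum>i<j. e i)"
  have "poly_deg_le D (\<lambda>h. c e * (\<Prod>i<j. h i ^ e i))" if "e \<in> E" for e
  proof (rule poly_deg_le_mono)
    show "poly_deg_le (\<Sum>i<j. e i) (\<lambda>h. c e * (\<Prod>i<j. h i ^ e i))"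
      by (rule poly_deg_le_cmult, rule poly_deg_le_monomial) simp
    show "(\<Sum>i<j. e i) \<le> D"
      unfolding D_def by (rule member_le_sum[OF that _ E(1)]) simp
  qed
  then have "poly_deg_le D f"
    unfolding f by (rule poly_deg_le_sum[OF E(1)])
  then show "polynomial_map f"
    unfolding polynomial_map_def ..
  have "(\<Prod>i<j. (0::'a) ^ e i) = 0" if e: "e \<in> E" for e
  proof -
    obtain i where i: "e i \<noteq> 0" using E(2) e by (metis (full_types) ext)
    then have "i < j" using E(2) e by (meson not_le)
    then show ?thesis using i by (intro prod_zero bexI[of _ i]) (auto simp: power_0_left)
  qed
  then show "f 0 = 0" unfolding f by simp
qed

section \<open>The PET weight\<close>

lemma image_mset_mset_set_less:
  fixes f :: "'x \<Rightarrow> nat" and g :: "'y \<Rightarrow> nat"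
  assumes "finite A" "finite B" "A' \<subseteq> A" "inj_on \<phi> A'" "\<phi> ` A' \<subseteq> B"
    and "\<And>a. a \<in> A' \<Longrightarrow> g (\<phi> a) = f a"
    and "b \<in> B" "b \<notin> \<phi> ` A'" "\<And>a. a \<in> A - A' \<Longrightarrow> f a < g b"
  shows "image_mset f (mset_set A) < image_mset g (mset_set B)"
proof -
  have fin: "finite A'" "finite (\<phi> ` A')" using assms(1,3) finite_subset by auto
  have A: "mset_set A = mset_set A' + mset_set (A - A')"
    using mset_set_Union[of A' "A - A'"] fin assms(1,3) by (simp add: Un_absorb1)
  have B: "mset_set B = mset_set (\<phi> ` A') + mset_set (B - \<phi> ` A')"
    using mset_set_Union[of "\<phi> ` A'" "B - \<phi> ` A'"] fin assms(2,5) by (simp add: Un_absorb1)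
  have "image_mset g (mset_set (\<phi> ` A')) = image_mset (g \<circ> \<phi>) (mset_set A')"
    by (simp add: image_mset_mset_set[OF assms(4), symmetric] multiset.map_comp)
  also have "\<dots> = image_mset f (mset_set A')"
    using assms(6) fin(1) by (intro image_mset_cong) auto
  finally have common: "image_mset g (mset_set (\<phi> ` A')) = image_mset f (mset_set A')" .
  let ?K = "image_mset f (mset_set (A - A'))"
  let ?J = "image_mset g (mset_set (B - \<phi> ` A'))"
  have "g b \<in># ?J" using assms(2,7,8) by auto
  moreover have "\<forall>k\<in>#?K. \<exists>j\<in>#?J. k < j"
  proof
    fix k assume "k \<in># ?K"
    then obtain a where "a \<in> A - A'" "k = f a" using assms(1) by auto
    then show "\<exists>j\<in>#?J. k < j" using \<open>g b \<in># ?J\<close> assms(9) by blast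
  qed
  ultimately have "multp (<) (image_mset f (mset_set A') + ?K) (image_mset f (mset_set A') + ?J)"
    by (intro one_step_implies_multp) auto
  then show ?thesis
    unfolding less_multiset_def A B image_mset_union common .
qed

definition leading_equiv :: "('v::ab_group_add \<Rightarrow> 'a::ab_group_add) \<Rightarrow> ('v \<Rightarrow> 'a) \<Rightarrow> bool" where
  "leading_equiv p q \<longleftrightarrow> poly_deg_le (poly_deg p - 1) (\<lambda>h. p h - q h)"

lemma leading_equiv_refl: "leading_equiv p p"
  unfolding leading_equiv_def by (simp add: poly_deg_le_const)

lemma poly_deg_leading_equiv:
  assumes "polynomial_map p" "polynomial_map q" "poly_deg p \<ge> 1" "leading_equiv p q"
  shows "poly_deg q = poly_deg p"
proof -
  have pq: "poly_deg_le (poly_deg p - 1) (\<lambda>h. p h - q h)"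
    using assms(4) leading_equiv_def by blast
  have "poly_deg_le (poly_deg p) (\<lambda>h. p h - (p h - q h))"
    by (rule poly_deg_le_diff[OF poly_deg_le_poly_deg[OF assms(1)] poly_deg_le_mono[OF pq]]) simp
  then have "poly_deg q \<le> poly_deg p"
    using poly_deg_le_iff[OF assms(2)] by simp
  moreover have "\<not> poly_deg q \<le> poly_deg p - 1"
  proof
    assume "poly_deg q \<le> poly_deg p - 1"
    then have "poly_deg_le (poly_deg p - 1) q"
      using poly_deg_le_iff[OF assms(2)] by simp
    from poly_deg_le_add[OF this pq] have "poly_deg_le (poly_deg p - 1) p"
      by simp
    then show False using poly_deg_le_iff[OF assms(1)] assms(3) by simp
  qed
  ultimately show ?thesis by simp
qed

lemma leading_equiv_sym:
  assumes "polynomial_map p" "polynomial_map q" "poly_deg p \<ge> 1" "leading_equiv p q"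
  shows "leading_equiv q p"
proof -
  have "poly_deg_le (poly_deg p - 1) (\<lambda>h. p h - q h)"
    using assms(4) leading_equiv_def by blast
  from poly_deg_le_uminus[OF this] show ?thesis
    unfolding leading_equiv_def poly_deg_leading_equiv[OF assms] by simp
qed

lemma leading_equiv_trans:
  assumes "polynomial_map p" "polynomial_map q" "poly_deg p \<ge> 1"
    and "leading_equiv p q" "leading_equiv q r"
  shows "leading_equiv p r"
proof -
  have "poly_deg_le (poly_deg p - 1) (\<lambda>h. p h - q h)"
    using assms(4) leading_equiv_def by blast
  moreover have "poly_deg_le (poly_deg p - 1) (\<lambda>h. q h - r h)"
    using assms(5) poly_deg_leading_equiv[OF assms(1-4)] leading_equiv_def by metis
  ultimately show ?thesis
    unfolding leading_equiv_def using poly_deg_le_add by fastforce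
qed

definition pet_family :: "('v::ab_group_add \<Rightarrow> 'a::ab_group_add) set \<Rightarrow> bool" where
  "pet_family P \<longleftrightarrow> finite P \<and> (\<forall>p\<in>P. polynomial_map p \<and> p 0 = 0)"

definition leading_class :: "('v::ab_group_add \<Rightarrow> 'a::ab_group_add) set \<Rightarrow> ('v \<Rightarrow> 'a) \<Rightarrow> ('v \<Rightarrow> 'a) set" where
  "leading_class P p = {q \<in> P - {0}. leading_equiv p q}"

definition leading_classes :: "('v::ab_group_add \<Rightarrow> 'a::ab_group_add) set \<Rightarrow> ('v \<Rightarrow> 'a) set set" where
  "leading_classes P = leading_class P ` (P - {0})"

text \<open>Well defined because leading-equivalent maps have the same degree.\<close>

definition class_deg :: "('v::ab_group_add \<Rightarrow> 'a::ab_group_add) set \<Rightarrow> nat" where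
  "class_deg C = poly_deg (SOME p. p \<in> C)"

text \<open>Bergelson's PET weight, compared in the multiset order: one class of higher degree outweighs
  any number of classes of lower degree.\<close>

definition pet_weight :: "('v::ab_group_add \<Rightarrow> 'a::ab_group_add) set \<Rightarrow> nat multiset" where
  "pet_weight P = image_mset class_deg (mset_set (leading_classes P))"

lemma pet_family_nonzero:
  assumes "pet_family P" "p \<in> P - {0}"
  shows "polynomial_map p" "p 0 = 0" "poly_deg p \<ge> 1"
  using assms poly_deg_pos unfolding pet_family_def by auto

lemma finite_leading_classes: "pet_family P \<Longrightarrow> finite (leading_classes P)"
  unfolding pet_family_def leading_classes_def by simp

lemma class_deg_leading_class:
  assumes "pet_family P" "p \<in> P - {0}"
  shows "class_deg (leading_class P p) = poly_deg p"
proof -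
  have "p \<in> leading_class P p"
    using assms(2) by (simp add: leading_class_def leading_equiv_refl)
  then have "(SOME q. q \<in> leading_class P p) \<in> leading_class P p"
    by (metis someI)
  then show ?thesis
    unfolding class_deg_def leading_class_def
    using poly_deg_leading_equiv pet_family_nonzero assms by blast
qed

lemma leading_class_eq_iff:
  assumes "pet_family P" "p \<in> P - {0}" "q \<in> P - {0}"
  shows "leading_class P p = leading_class P q \<longleftrightarrow> leading_equiv p q"
proof
  assume "leading_class P p = leading_class P q"
  then have "q \<in> leading_class P p"
    using assms(3) by (simp add: leading_class_def leading_equiv_refl)
  then show "leading_equiv p q" by (simp add: leading_class_def)
next
  assume pq: "leading_equiv p q"
  note p = pet_family_nonzero[OF assms(1,2)] and q = pet_family_nonzero[OF assms(1,3)]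
  have qp: "leading_equiv q p" using leading_equiv_sym p q pq by blast
  show "leading_class P p = leading_class P q"
    unfolding leading_class_def
    using leading_equiv_trans[OF p(1) q(1) p(3) pq] leading_equiv_trans[OF q(1) p(1) q(3) qp]
    by blast
qed

definition pet_derivative :: "('v::ab_group_add \<Rightarrow> 'a::ab_group_add) \<Rightarrow> ('v \<Rightarrow> 'a) \<Rightarrow> 'v \<Rightarrow> ('v \<Rightarrow> 'a)" where
  "pet_derivative p1 p x = (\<lambda>h. p (h + x) - p x - p1 h)"

definition pet_leading_part :: "('v::ab_group_add \<Rightarrow> 'a::ab_group_add) \<Rightarrow> ('v \<Rightarrow> 'a) \<Rightarrow> ('v \<Rightarrow> 'a)" where
  "pet_leading_part p1 p = (if poly_deg p1 < poly_deg p then p else (\<lambda>h. p h - p1 h))"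

lemma polynomial_map_pet_derivative:
  assumes "polynomial_map p" "polynomial_map p1"
  shows "polynomial_map (pet_derivative p1 p x)"
proof -
  obtain d where "poly_deg_le d p" "poly_deg_le d p1"
    using assms unfolding polynomial_map_def by (meson poly_deg_le_mono nat_le_linear)
  then have "poly_deg_le d (\<lambda>h. p (h + x) - p x - p1 h)"
    by (rule poly_deg_le_diff[OF poly_deg_le_diff[OF poly_deg_le_shift poly_deg_le_const]])
  then show ?thesis
    unfolding polynomial_map_def pet_derivative_def by blast
qed

lemma poly_deg_le_pet_leading_part:
  assumes "polynomial_map p" "polynomial_map p1" "poly_deg p1 \<le> poly_deg p"
  shows "poly_deg_le (poly_deg p) (pet_leading_part p1 p)"
  unfolding pet_leading_part_def
  using poly_deg_le_poly_deg[OF assms(1)]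
    poly_deg_le_diff[OF poly_deg_le_poly_deg[OF assms(1)] poly_deg_le_mono[OF poly_deg_le_poly_deg[OF assms(2)] assms(3)]]
  by simp

text \<open>The point is that \<open>p (h + x) - p h - p x\<close> has degree below \<open>poly_deg p\<close>.\<close>

lemma poly_deg_le_pet_leading_part_diff:
  assumes "polynomial_map p" "polynomial_map p1" "poly_deg p1 \<le> poly_deg p"
  shows "poly_deg_le (poly_deg p - 1) (\<lambda>h. pet_leading_part p1 p h - pet_derivative p1 p x h)"
proof -
  have "poly_deg_le (poly_deg p - 1) (\<lambda>h. (p (h + x) - p h) - p x)"
    using poly_deg_le_diff[OF poly_deg_le_difference[OF poly_deg_le_poly_deg[OF assms(1)]] poly_deg_le_const]
    by blast
  moreover have "(\<lambda>h. (p (h + x) - p h) - p x) = (\<lambda>h. pet_derivative p1 p x h - (p h - p1 h))"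
    by (simp add: pet_derivative_def fun_eq_iff algebra_simps)
  ultimately have diff: "poly_deg_le (poly_deg p - 1) (\<lambda>h. pet_derivative p1 p x h - (p h - p1 h))"
    by simp
  have "poly_deg_le (poly_deg p - 1) (\<lambda>h. pet_derivative p1 p x h - pet_leading_part p1 p h)"
  proof (cases "poly_deg p1 < poly_deg p")
    case True
    then have "poly_deg_le (poly_deg p - 1) p1"
      using poly_deg_le_iff[OF assms(2)] by simp
    from poly_deg_le_diff[OF diff this] show ?thesis
      using True by (simp add: pet_leading_part_def)
  next
    case False
    then show ?thesis using diff by (simp add: pet_leading_part_def)
  qed
  from poly_deg_le_uminus[OF this] show ?thesis by simp
qed

lemma poly_deg_pet_derivative:
  assumes "polynomial_map p" "polynomial_map p1" "1 \<le> poly_deg p1" "poly_deg p1 \<le> poly_deg p"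
    and "poly_deg p1 \<le> poly_deg (pet_derivative p1 p x)"
  shows "poly_deg (pet_derivative p1 p x) = poly_deg p"
    and "poly_deg p = poly_deg p1 \<Longrightarrow> \<not> leading_equiv p p1"
proof -
  let ?q = "pet_derivative p1 p x"
  have q: "polynomial_map ?q"
    using polynomial_map_pet_derivative assms by blast
  have H: "poly_deg_le (poly_deg p - 1) (\<lambda>h. pet_leading_part p1 p h - ?q h)"
    using poly_deg_le_pet_leading_part_diff assms by blast
  have "poly_deg_le (poly_deg p) (\<lambda>h. pet_leading_part p1 p h - (pet_leading_part p1 p h - ?q h))"
    by (rule poly_deg_le_diff[OF poly_deg_le_pet_leading_part[OF assms(1,2,4)] poly_deg_le_mono[OF H]]) simp
  then have le: "poly_deg ?q \<le> poly_deg p"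
    using poly_deg_le_iff[OF q] by simp
  show "poly_deg ?q = poly_deg p"
  proof (cases "poly_deg p1 < poly_deg p")
    case True
    have "\<not> poly_deg ?q \<le> poly_deg p - 1"
    proof
      assume "poly_deg ?q \<le> poly_deg p - 1"
      then have "poly_deg_le (poly_deg p - 1) ?q"
        using poly_deg_le_iff[OF q] by simp
      from poly_deg_le_add[OF this H] have "poly_deg_le (poly_deg p - 1) p"
        using True by (simp add: pet_leading_part_def)
      then show False using poly_deg_le_iff[OF assms(1)] True by simp
    qed
    then show ?thesis using le by simp
  qed (use le assms(5) in simp)
  show "\<not> leading_equiv p p1" if "poly_deg p = poly_deg p1"
  proof
    assume "leading_equiv p p1"
    then have "poly_deg_le (poly_deg p - 1) (\<lambda>h. p h - p1 h)"
      unfolding leading_equiv_def .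
    from poly_deg_le_diff[OF this H] have "poly_deg_le (poly_deg p - 1) ?q"
      using that by (simp add: pet_leading_part_def)
    then show False using poly_deg_le_iff[OF q] assms(3,5) that by simp
  qed
qed

lemma leading_equiv_pet_derivative:
  assumes "polynomial_map p" "polynomial_map p'" "polynomial_map p1"
    and "1 \<le> poly_deg p" "poly_deg p1 \<le> poly_deg p"
    and "poly_deg (pet_derivative p1 p x) = poly_deg p" "leading_equiv p p'"
  shows "leading_equiv (pet_derivative p1 p x) (pet_derivative p1 p' x')"
proof -
  have deg: "poly_deg p' = poly_deg p"
    using poly_deg_leading_equiv assms(1,2,4,7) by blast
  have H: "poly_deg_le (poly_deg p - 1) (\<lambda>h. pet_leading_part p1 p h - pet_derivative p1 p x h)"
    using poly_deg_le_pet_leading_part_diff assms by blast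
  have H': "poly_deg_le (poly_deg p - 1) (\<lambda>h. pet_leading_part p1 p' h - pet_derivative p1 p' x' h)"
    using poly_deg_le_pet_leading_part_diff[of p' p1 x'] assms deg by simp
  have "pet_leading_part p1 p h - pet_leading_part p1 p' h = p h - p' h" for h
    using deg by (simp add: pet_leading_part_def)
  then have split: "(\<lambda>h. pet_derivative p1 p x h - pet_derivative p1 p' x' h) = (\<lambda>h.
      (p h - p' h) - (pet_leading_part p1 p h - pet_derivative p1 p x h)
      + (pet_leading_part p1 p' h - pet_derivative p1 p' x' h))"
    by (simp add: fun_eq_iff algebra_simps)
  have "poly_deg_le (poly_deg p - 1) (\<lambda>h. p h - p' h)"
    using assms(7) unfolding leading_equiv_def .
  from poly_deg_le_add[OF poly_deg_le_diff[OF this H] H'] show ?thesis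
    unfolding leading_equiv_def assms(6) split .
qed

definition pet_derived_family :: "('v::ab_group_add \<Rightarrow> 'a::ab_group_add) set \<Rightarrow> ('v \<Rightarrow> 'a) \<Rightarrow> 'v set \<Rightarrow> ('v \<Rightarrow> 'a) set" where
  "pet_derived_family P p1 X = (\<lambda>(p, x). pet_derivative p1 p x) ` ((P - {0}) \<times> X)"

lemma pet_family_derived:
  assumes "pet_family P" "p1 \<in> P - {0}" "finite X"
  shows "pet_family (pet_derived_family P p1 X)"
  unfolding pet_family_def
proof
  show "finite (pet_derived_family P p1 X)"
    using assms(1,3) unfolding pet_family_def pet_derived_family_def by simp
  show "\<forall>q\<in>pet_derived_family P p1 X. polynomial_map q \<and> q 0 = 0"
  proof
    fix q assume "q \<in> pet_derived_family P p1 X"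
    then obtain p x where p: "p \<in> P - {0}" and q: "q = pet_derivative p1 p x"
      unfolding pet_derived_family_def by auto
    note p = pet_family_nonzero[OF assms(1) p] and p1 = pet_family_nonzero[OF assms(1,2)]
    show "polynomial_map q \<and> q 0 = 0"
      unfolding q using polynomial_map_pet_derivative[OF p(1) p1(1)] p(2) p1(2)
      by (simp add: pet_derivative_def)
  qed
qed

lemma leading_class_pet_derivative:
  assumes P: "pet_family P" and p1: "p1 \<in> P - {0}"
    and min: "\<And>p. p \<in> P - {0} \<Longrightarrow> poly_deg p1 \<le> poly_deg p"
    and p: "p \<in> P - {0}" and high: "poly_deg p1 \<le> poly_deg (pet_derivative p1 p x)"
  shows "poly_deg (pet_derivative p1 p x) = poly_deg p"
    and "leading_class P p \<noteq> leading_class P p1"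
    and "\<And>p' x'. p' \<in> P - {0} \<Longrightarrow> leading_class P p = leading_class P p' \<Longrightarrow>
           leading_equiv (pet_derivative p1 p x) (pet_derivative p1 p' x')"
proof -
  note p1_props = pet_family_nonzero[OF P p1] and p_props = pet_family_nonzero[OF P p]
  note pet = poly_deg_pet_derivative[OF p_props(1) p1_props(1) p1_props(3) min[OF p] high]
  show deg: "poly_deg (pet_derivative p1 p x) = poly_deg p"
    by (rule pet(1))
  show "leading_class P p \<noteq> leading_class P p1"
  proof
    assume "leading_class P p = leading_class P p1"
    then have equiv: "leading_equiv p p1"
      using leading_class_eq_iff[OF P p p1] by blast
    then have "poly_deg p1 = poly_deg p"
      using poly_deg_leading_equiv p_props p1_props by blast
    then show False using pet(2) equiv by simp
  qed
  fix p' x' assume p': "p' \<in> P - {0}" "leading_class P p = leading_class P p'"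
  then have "leading_equiv p p'"
    using leading_class_eq_iff[OF P p] by blast
  then show "leading_equiv (pet_derivative p1 p x) (pet_derivative p1 p' x')"
    using leading_equiv_pet_derivative[OF p_props(1) pet_family_nonzero(1)[OF P p'(1)] p1_props(1)
        p_props(3) min[OF p] deg]
    by blast
qed

text \<open>The derived family has smaller weight: its classes of degree at least \<open>poly_deg p1\<close> inject,
  degree-preservingly, into the classes of \<open>P\<close> other than that of \<open>p1\<close>, and all its other classes
  have degree below \<open>poly_deg p1\<close>.\<close>

lemma pet_weight_derived_less:
  assumes P: "pet_family P" and p1: "p1 \<in> P - {0}"
    and min: "\<And>p. p \<in> P - {0} \<Longrightarrow> poly_deg p1 \<le> poly_deg p" and "finite X"
  shows "pet_weight (pet_derived_family P p1 X) < pet_weight P"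
proof -
  define Q where "Q = pet_derived_family P p1 X"
  have Q: "pet_family Q" unfolding Q_def using pet_family_derived assms by blast
  have "\<forall>C\<in>leading_classes Q. \<exists>p x. p \<in> P - {0} \<and> pet_derivative p1 p x \<in> Q - {0}
      \<and> leading_class Q (pet_derivative p1 p x) = C"
    by (force simp: leading_classes_def Q_def pet_derived_family_def)
  then obtain rp rx where rp: "\<And>C. C \<in> leading_classes Q \<Longrightarrow> rp C \<in> P - {0}"
    and rep: "\<And>C. C \<in> leading_classes Q \<Longrightarrow> pet_derivative p1 (rp C) (rx C) \<in> Q - {0}
      \<and> leading_class Q (pet_derivative p1 (rp C) (rx C)) = C"
    by metis
  have class_deg_rep: "class_deg C = poly_deg (pet_derivative p1 (rp C) (rx C))"
    if "C \<in> leading_classes Q" for C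
    using rep[OF that] class_deg_leading_class[OF Q] by metis
  define A' where "A' = {C \<in> leading_classes Q. poly_deg p1 \<le> class_deg C}"
  have A': "C \<in> leading_classes Q" "rp C \<in> P - {0}"
    "poly_deg p1 \<le> poly_deg (pet_derivative p1 (rp C) (rx C))" if "C \<in> A'" for C
    using that rp class_deg_rep unfolding A'_def by auto
  have derivative: "poly_deg (pet_derivative p1 (rp C) (rx C)) = poly_deg (rp C)"
    "leading_class P (rp C) \<noteq> leading_class P p1"
    "\<And>p' x'. p' \<in> P - {0} \<Longrightarrow> leading_class P (rp C) = leading_class P p' \<Longrightarrow>
       leading_equiv (pet_derivative p1 (rp C) (rx C)) (pet_derivative p1 p' x')"
    if "C \<in> A'" for C
    using leading_class_pet_derivative[OF P p1 min A'(2)[OF that] A'(3)[OF that]] by blast+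
  have "image_mset class_deg (mset_set (leading_classes Q)) < image_mset class_deg (mset_set (leading_classes P))"
  proof (rule image_mset_mset_set_less[where A' = A' and \<phi> = "\<lambda>C. leading_class P (rp C)" and b = "leading_class P p1"])
    show "finite (leading_classes Q)" "finite (leading_classes P)"
      using finite_leading_classes[OF P] finite_leading_classes[OF Q] by auto
    show "A' \<subseteq> leading_classes Q"
      using A' by blast
    show "(\<lambda>C. leading_class P (rp C)) ` A' \<subseteq> leading_classes P"
      using A' unfolding leading_classes_def[of P] by blast
    show "class_deg (leading_class P (rp C)) = class_deg C" if "C \<in> A'" for C
      using class_deg_leading_class[OF P A'(2)[OF that]] class_deg_rep[OF A'(1)[OF that]] derivative(1)[OF that]
      by simp
    show "leading_class P p1 \<in> leading_classes P"
      unfolding leading_classes_def using p1 by blast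
    show "class_deg C < class_deg (leading_class P p1)" if "C \<in> leading_classes Q - A'" for C
      using class_deg_leading_class[OF P p1] that unfolding A'_def by auto
    show "leading_class P p1 \<notin> (\<lambda>C. leading_class P (rp C)) ` A'"
      using derivative(2) by fastforce
    show "inj_on (\<lambda>C. leading_class P (rp C)) A'"
    proof (rule inj_onI)
      fix C C' assume C: "C \<in> A'" "C' \<in> A'" "leading_class P (rp C) = leading_class P (rp C')"
      have "leading_equiv (pet_derivative p1 (rp C) (rx C)) (pet_derivative p1 (rp C') (rx C'))"
        using derivative(3)[OF C(1) A'(2)[OF C(2)] C(3)] .
      then show "C = C'"
        using leading_class_eq_iff[OF Q] rep A'(1) C(1,2) by metis
    qed
  qed
  then show ?thesis unfolding pet_weight_def Q_def .
qed

section \<open>Polynomial van der Waerden theorem along IP sets\<close>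

definition mono_pattern :: "('v::ab_group_add \<Rightarrow> 'a::ab_group_add) set \<Rightarrow> (nat \<Rightarrow> 'v) \<Rightarrow> nat \<Rightarrow> 'a set \<Rightarrow> ('a \<Rightarrow> nat) \<Rightarrow> bool" where
  "mono_pattern P y N W c \<longleftrightarrow> (\<exists>a H. H \<subseteq> {..<N} \<and> H \<noteq> {} \<and> a \<in> W \<and>
     (\<forall>p\<in>P. a + p (\<Sum>n\<in>H. y n) \<in> W \<and> c (a + p (\<Sum>n\<in>H. y n)) = c a))"

definition polynomial_vdW :: "('v::ab_group_add \<Rightarrow> 'a::ab_group_add) set \<Rightarrow> bool" where
  "polynomial_vdW P \<longleftrightarrow> (\<forall>(y::nat \<Rightarrow> 'v) r. \<exists>N W. finite W \<and>
     (\<forall>c. (\<forall>u. c u < r) \<longrightarrow> mono_pattern P y N W c))"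

definition focused_pattern :: "('v::ab_group_add \<Rightarrow> 'a::ab_group_add) set \<Rightarrow> ('v \<Rightarrow> 'a) \<Rightarrow> (nat \<Rightarrow> 'v) \<Rightarrow> nat \<Rightarrow> 'a set \<Rightarrow> ('a \<Rightarrow> nat) \<Rightarrow> nat \<Rightarrow> bool" where
  "focused_pattern P p1 y N W c s \<longleftrightarrow> (\<exists>a K. a \<in> W \<and>
     (\<forall>l<s. K l \<subseteq> {..<N} \<and> K l \<noteq> {} \<and> (\<forall>p\<in>P. a + p (\<Sum>n\<in>K l. y n) \<in> W \<and>
        c (a + p (\<Sum>n\<in>K l. y n)) = c (a + p1 (\<Sum>n\<in>K l. y n)))) \<and>
     inj_on (\<lambda>l. c (a + p1 (\<Sum>n\<in>K l. y n))) {..<s} \<and>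
     (\<forall>l<s. c (a + p1 (\<Sum>n\<in>K l. y n)) \<noteq> c a))"

definition focusing :: "('v::ab_group_add \<Rightarrow> 'a::ab_group_add) set \<Rightarrow> ('v \<Rightarrow> 'a) \<Rightarrow> nat \<Rightarrow> bool" where
  "focusing P p1 s \<longleftrightarrow> (\<forall>(y::nat \<Rightarrow> 'v) r. \<exists>N W. finite W \<and>
     (\<forall>c. (\<forall>u. c u < r) \<longrightarrow> mono_pattern P y N W c \<or> focused_pattern P p1 y N W c s))"

lemma focusing_0: "focusing P p1 0"
  unfolding focusing_def focused_pattern_def by (intro allI exI[of _ 0] exI[of _ "{0}"]) auto

lemma focused_pattern_impossible:
  assumes "\<forall>u. c u < r"
  shows "\<not> focused_pattern P p1 y N W c r"
proof
  assume "focused_pattern P p1 y N W c r"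
  then obtain a K where inj: "inj_on (\<lambda>l. c (a + p1 (\<Sum>n\<in>K l. y n))) {..<r}"
    and ne: "\<forall>l<r. c (a + p1 (\<Sum>n\<in>K l. y n)) \<noteq> c a"
    unfolding focused_pattern_def by (elim exE conjE)
  have "(\<lambda>l. c (a + p1 (\<Sum>n\<in>K l. y n))) ` {..<r} \<subseteq> {..<r} - {c a}"
    using ne assms by auto
  from card_inj_on_le[OF inj this] have "r \<le> r - 1"
    using assms[rule_format, of a] by simp
  then show False
    using assms[rule_format, of a] by simp
qed

lemma mono_pattern_remove_zero:
  assumes "mono_pattern (P - {0}) y N W c"
  shows "mono_pattern P y N W c"
proof -
  obtain a H where "H \<subseteq> {..<N}" "H \<noteq> {}" "a \<in> W"
    and mono: "\<forall>p\<in>P - {0}. a + p (\<Sum>n\<in>H. y n) \<in> W \<and> c (a + p (\<Sum>n\<in>H. y n)) = c a"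
    using assms unfolding mono_pattern_def by (elim exE conjE)
  moreover have "a + p (\<Sum>n\<in>H. y n) \<in> W \<and> c (a + p (\<Sum>n\<in>H. y n)) = c a" if "p \<in> P" for p
    using mono that \<open>a \<in> W\<close> by (cases "p = 0") auto
  ultimately show ?thesis
    unfolding mono_pattern_def by blast
qed

lemma mono_pattern_translate:
  assumes "mono_pattern P y N W (\<lambda>u. c (b + u))" "N \<le> N'" "\<And>w. w \<in> W \<Longrightarrow> b + w \<in> W'"
  shows "mono_pattern P y N' W' c"
proof -
  obtain a H where "H \<subseteq> {..<N}" "H \<noteq> {}" "a \<in> W"
    and "\<forall>p\<in>P. a + p (\<Sum>n\<in>H. y n) \<in> W \<and> c (b + (a + p (\<Sum>n\<in>H. y n))) = c (b + a)"
    using assms(1) unfolding mono_pattern_def by (elim exE conjE)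
  then show ?thesis
    unfolding mono_pattern_def using assms(2,3)
    by (intro exI[of _ "b + a"] exI[of _ H]) (auto simp: add.assoc)
qed

lemma mono_or_focused_pattern:
  assumes "p1 \<in> P" "a \<in> W"
    and "\<And>l. l < s \<Longrightarrow> K l \<subseteq> {..<N} \<and> K l \<noteq> {}"
    and "\<And>l p. l < s \<Longrightarrow> p \<in> P \<Longrightarrow> a + p (\<Sum>n\<in>K l. y n) \<in> W \<and> c (a + p (\<Sum>n\<in>K l. y n)) = col l"
    and "inj_on col {..<s}"
  shows "mono_pattern P y N W c \<or> focused_pattern P p1 y N W c s"
proof (cases "\<exists>l<s. col l = c a")
  case True
  then obtain l where "l < s" "col l = c a" by blast
  then have "mono_pattern P y N W c"
    unfolding mono_pattern_def using assms(2-4) by (intro exI[of _ a] exI[of _ "K l"]) auto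
  then show ?thesis ..
next
  case False
  have col: "c (a + p1 (\<Sum>n\<in>K l. y n)) = col l" if "l < s" for l
    using assms(1,4) that by blast
  have "focused_pattern P p1 y N W c s"
    unfolding focused_pattern_def
  proof (intro exI[of _ a] exI[of _ K] conjI allI impI)
    show "inj_on (\<lambda>l. c (a + p1 (\<Sum>n\<in>K l. y n))) {..<s}"
      using assms(5) col by (simp add: inj_on_def)
  qed (use assms(2-4) col False in auto)
  then show ?thesis ..
qed

text \<open>Since \<open>b + a - p1 h + p (x + h) = b + pet_derivative p1 p x h + (a + p x)\<close> with \<open>h\<close> the sum
  over \<open>J\<close>, enlarging every old block by \<open>J\<close> keeps its colour, and \<open>J\<close> alone becomes a further
  block of the colour of \<open>b + a\<close>.\<close>

lemma focused_pattern_extend: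
  fixes y :: "nat \<Rightarrow> 'v::ab_group_add" and P :: "('v \<Rightarrow> 'a::ab_group_add) set"
  assumes foc: "focused_pattern P p1 y N W (\<lambda>u. c (b + u)) s"
    and p1: "p1 \<in> P" and zero: "\<And>p. p \<in> P \<Longrightarrow> p 0 = 0"
    and J: "J \<subseteq> {N..<N'}" "J \<noteq> {}"
    and transfer: "\<And>p H w. p \<in> P \<Longrightarrow> H \<subseteq> {..<N} \<Longrightarrow> w \<in> W \<Longrightarrow>
        b + pet_derivative p1 p (\<Sum>n\<in>H. y n) (\<Sum>n\<in>J. y n) + w \<in> W'
        \<and> c (b + pet_derivative p1 p (\<Sum>n\<in>H. y n) (\<Sum>n\<in>J. y n) + w) = c (b + w)"
    and start: "\<And>a. a \<in> W \<Longrightarrow> b + a - p1 (\<Sum>n\<in>J. y n) \<in> W'"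
  shows "mono_pattern P y N' W' c \<or> focused_pattern P p1 y N' W' c (Suc s)"
proof -
  define h where "h = (\<Sum>n\<in>J. y n)"
  obtain a K where a: "a \<in> W"
    and K: "\<forall>l<s. K l \<subseteq> {..<N} \<and> K l \<noteq> {} \<and> (\<forall>p\<in>P. a + p (\<Sum>n\<in>K l. y n) \<in> W \<and>
      c (b + (a + p (\<Sum>n\<in>K l. y n))) = c (b + (a + p1 (\<Sum>n\<in>K l. y n))))"
    and inj: "inj_on (\<lambda>l. c (b + (a + p1 (\<Sum>n\<in>K l. y n)))) {..<s}"
    and ne: "\<forall>l<s. c (b + (a + p1 (\<Sum>n\<in>K l. y n))) \<noteq> c (b + a)"
    using foc unfolding focused_pattern_def by (elim exE conjE)
  define K' where "K' l = (if l < s then K l \<union> J else J)" for l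
  define col where "col l = (if l < s then c (b + (a + p1 (\<Sum>n\<in>K l. y n))) else c (b + a))" for l
  have "N \<le> N'" "J \<subseteq> {..<N'}" using J by fastforce+
  show ?thesis
  proof (rule mono_or_focused_pattern[of p1 P "b + a - p1 h" W' "Suc s" K' N' y c col])
    show "b + a - p1 h \<in> W'" using start a h_def by blast
    show "K' l \<subseteq> {..<N'} \<and> K' l \<noteq> {}" if "l < Suc s" for l
    proof -
      have "l < s \<Longrightarrow> K l \<subseteq> {..<N'}" using K \<open>N \<le> N'\<close> by fastforce
      then show ?thesis using \<open>J \<subseteq> {..<N'}\<close> J(2) unfolding K'_def by auto
    qed
    show "b + a - p1 h + p (\<Sum>n\<in>K' l. y n) \<in> W' \<and> c (b + a - p1 h + p (\<Sum>n\<in>K' l. y n)) = col l"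
      if "l < Suc s" "p \<in> P" for l p
    proof -
      define H where "H = (if l < s then K l else {})"
      have H: "H \<subseteq> {..<N}" using K unfolding H_def by auto
      have "H \<inter> J = {}" using H J(1) by fastforce
      moreover have "finite H" "finite J"
        using finite_subset[OF H] finite_subset[OF J(1)] by auto
      ultimately
      have "(\<Sum>n\<in>K' l. y n) = (\<Sum>n\<in>H. y n) + h"
        unfolding K'_def H_def h_def by (cases "l < s") (simp_all add: sum.union_disjoint)
      then have eq: "b + a - p1 h + p (\<Sum>n\<in>K' l. y n)
          = b + pet_derivative p1 p (\<Sum>n\<in>H. y n) h + (a + p (\<Sum>n\<in>H. y n))"
        by (simp add: pet_derivative_def algebra_simps)
      have "a + p (\<Sum>n\<in>H. y n) \<in> W \<and> c (b + (a + p (\<Sum>n\<in>H. y n))) = col l"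
        using K a zero[OF that(2)] that unfolding H_def col_def by auto
      then show ?thesis
        unfolding eq using transfer[OF that(2) H, folded h_def] by auto
    qed
    have "inj_on col {..<s}"
      using inj unfolding col_def by (simp add: inj_on_def)
    moreover have "col s \<notin> col ` {..<s}"
      using ne unfolding col_def by auto
    ultimately show "inj_on col {..<Suc s}"
      by (simp add: lessThan_Suc)
  qed (use p1 in blast)
qed

text \<open>Colouring \<open>u\<close> by the colour pattern of the window \<open>u + W\<close> is again a finite colouring.\<close>

lemma polynomial_vdW_window:
  fixes Q :: "('v::ab_group_add \<Rightarrow> 'a::ab_group_add) set" and y :: "nat \<Rightarrow> 'v"
  assumes "polynomial_vdW Q" "finite W"
  shows "\<exists>N W'. finite W' \<and> (\<forall>c::'a \<Rightarrow> nat. (\<forall>u. c u < r) \<longrightarrow> (\<exists>b H. H \<subseteq> {..<N} \<and> H \<noteq> {} \<and> b \<in> W' \<and>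
     (\<forall>q\<in>Q. b + q (\<Sum>n\<in>H. y n) \<in> W' \<and> (\<forall>w\<in>W. c (b + q (\<Sum>n\<in>H. y n) + w) = c (b + w)))))"
proof -
  define patterns where "patterns = PiE W (\<lambda>_. {..<r})"
  have "finite patterns" unfolding patterns_def using assms(2) by (simp add: finite_PiE)
  from finite_imp_inj_to_nat_seg[OF this] obtain enc :: "('a \<Rightarrow> nat) \<Rightarrow> nat" and n
    where enc: "enc ` patterns = {i. i < n}" "inj_on enc patterns"
    by (elim exE conjE)
  obtain N W' where "finite W'" and mono: "\<forall>\<chi>. (\<forall>u. \<chi> u < n) \<longrightarrow> mono_pattern Q y N W' \<chi>"
    using assms(1)[unfolded polynomial_vdW_def, THEN spec[of _ y], THEN spec[of _ n]] by blast
  show ?thesis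
  proof (intro exI[of _ N] exI[of _ W'] conjI allI impI)
    show "finite W'" by fact
    fix c :: "'a \<Rightarrow> nat" assume c: "\<forall>u. c u < r"
    define \<chi> where "\<chi> u = enc (restrict (\<lambda>w. c (u + w)) W)" for u
    have pattern: "restrict (\<lambda>w. c (u + w)) W \<in> patterns" for u
      unfolding patterns_def using c by auto
    then have "\<forall>u. \<chi> u < n"
      unfolding \<chi>_def using enc(1) by blast
    with mono have "mono_pattern Q y N W' \<chi>" by blast
    then obtain b H where "H \<subseteq> {..<N}" "H \<noteq> {}" "b \<in> W'"
      and b: "\<forall>q\<in>Q. b + q (\<Sum>n\<in>H. y n) \<in> W' \<and> \<chi> (b + q (\<Sum>n\<in>H. y n)) = \<chi> b"
      unfolding mono_pattern_def by (elim exE conjE)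
    have same: "c (u + w) = c (v + w)" if "\<chi> u = \<chi> v" "w \<in> W" for u v w
    proof -
      have "restrict (\<lambda>w. c (u + w)) W = restrict (\<lambda>w. c (v + w)) W"
        using inj_onD[OF enc(2)] pattern that(1) unfolding \<chi>_def by blast
      then show ?thesis
        using that(2) by (metis restrict_apply')
    qed
    have "b + q (\<Sum>n\<in>H. y n) \<in> W' \<and> (\<forall>w\<in>W. c (b + q (\<Sum>n\<in>H. y n) + w) = c (b + w))" if "q \<in> Q" for q
      using b same[of "b + q (\<Sum>n\<in>H. y n)" b] that by simp
    then show "\<exists>b H. H \<subseteq> {..<N} \<and> H \<noteq> {} \<and> b \<in> W' \<and>
        (\<forall>q\<in>Q. b + q (\<Sum>n\<in>H. y n) \<in> W' \<and> (\<forall>w\<in>W. c (b + q (\<Sum>n\<in>H. y n) + w) = c (b + w)))"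
      using \<open>H \<subseteq> {..<N}\<close> \<open>H \<noteq> {}\<close> \<open>b \<in> W'\<close> by blast
  qed
qed

text \<open>The focusing step: the derived family, applied to the colour patterns of translates of the
  window \<open>W\<close> along the tail of \<open>y\<close> beyond \<open>N\<close>, supplies the new block.\<close>

lemma focusing_Suc:
  fixes P :: "('v::ab_group_add \<Rightarrow> 'a::ab_group_add) set"
  assumes p1: "p1 \<in> P" and zero: "\<And>p. p \<in> P \<Longrightarrow> p 0 = 0"
    and derived: "\<And>X. finite X \<Longrightarrow> polynomial_vdW ((\<lambda>(p, x). pet_derivative p1 p x) ` (P \<times> X))"
    and "focusing P p1 s"
  shows "focusing P p1 (Suc s)"
  unfolding focusing_def
proof (intro allI)
  fix y :: "nat \<Rightarrow> 'v" and r :: nat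
  obtain N W where W: "finite W"
    and foc: "\<forall>c. (\<forall>u. c u < r) \<longrightarrow> mono_pattern P y N W c \<or> focused_pattern P p1 y N W c s"
    using assms(4)[unfolded focusing_def, THEN spec[of _ y], THEN spec[of _ r]] by blast
  define Q where "Q = (\<lambda>(p, x). pet_derivative p1 p x) ` (P \<times> (\<lambda>H. \<Sum>n\<in>H. y n) ` Pow {..<N})"
  define y' where "y' m = y (m + N)" for m
  have "polynomial_vdW Q" unfolding Q_def by (rule derived) simp
  from polynomial_vdW_window[OF this W, of r y'] obtain N' W' where "finite W'"
    and window: "\<forall>c::'a \<Rightarrow> nat. (\<forall>u. c u < r) \<longrightarrow> (\<exists>b H. H \<subseteq> {..<N'} \<and> H \<noteq> {} \<and> b \<in> W' \<and>
      (\<forall>q\<in>Q. b + q (\<Sum>n\<in>H. y' n) \<in> W' \<and> (\<forall>w\<in>W. c (b + q (\<Sum>n\<in>H. y' n) + w) = c (b + w))))"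
    by (elim exE conjE)
  define W'' where "W'' = (\<lambda>(u, w, H). u + w - p1 (\<Sum>n\<in>H. y' n)) ` (W' \<times> W \<times> Pow {..<N'})"
  have W'': "u + w - p1 (\<Sum>n\<in>H. y' n) \<in> W''" if "u \<in> W'" "w \<in> W" "H \<subseteq> {..<N'}" for u w H
    using that unfolding W''_def by force
  have "p1 0 = 0" using zero p1 .
  show "\<exists>N W. finite W \<and> (\<forall>c. (\<forall>u. c u < r) \<longrightarrow> mono_pattern P y N W c \<or> focused_pattern P p1 y N W c (Suc s))"
  proof (intro exI[of _ "N + N'"] exI[of _ W''] conjI allI impI)
    show "finite W''" unfolding W''_def using W \<open>finite W'\<close> by simp
    fix c :: "'a \<Rightarrow> nat" assume c: "\<forall>u. c u < r"
    obtain b H' where H': "H' \<subseteq> {..<N'}" "H' \<noteq> {}" "b \<in> W'"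
      and b: "\<forall>q\<in>Q. b + q (\<Sum>n\<in>H'. y' n) \<in> W' \<and> (\<forall>w\<in>W. c (b + q (\<Sum>n\<in>H'. y' n) + w) = c (b + w))"
      using window[THEN spec[of _ c], THEN mp, OF c] by (elim exE conjE)
    define H0 where "H0 = (\<lambda>m. m + N) ` H'"
    have h: "(\<Sum>n\<in>H0. y n) = (\<Sum>n\<in>H'. y' n)"
      unfolding H0_def y'_def by (subst sum.reindex) (auto simp: inj_on_def)
    have "\<forall>u. c (b + u) < r" using c by blast
    with foc[THEN spec[of _ "\<lambda>u. c (b + u)"]]
    have "mono_pattern P y N W (\<lambda>u. c (b + u)) \<or> focused_pattern P p1 y N W (\<lambda>u. c (b + u)) s"
      by blast
    then show "mono_pattern P y (N + N') W'' c \<or> focused_pattern P p1 y (N + N') W'' c (Suc s)"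
    proof (elim disjE)
      assume "mono_pattern P y N W (\<lambda>u. c (b + u))"
      then have "mono_pattern P y (N + N') W'' c"
        by (rule mono_pattern_translate) (use W''[of b _ "{}"] \<open>b \<in> W'\<close> \<open>p1 0 = 0\<close> in auto)
      then show ?thesis ..
    next
      assume "focused_pattern P p1 y N W (\<lambda>u. c (b + u)) s"
      then show ?thesis
      proof (rule focused_pattern_extend)
        show "p1 \<in> P" "\<And>p. p \<in> P \<Longrightarrow> p 0 = 0" using p1 zero by auto
        show "H0 \<subseteq> {N..<N + N'}" "H0 \<noteq> {}" using H' unfolding H0_def by auto
        show "b + a - p1 (\<Sum>n\<in>H0. y n) \<in> W''" if "a \<in> W" for a
          using W''[OF \<open>b \<in> W'\<close> that H'(1)] h by simp
        fix p H w assume "p \<in> P" "H \<subseteq> {..<N}" "w \<in> W"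
        then have "pet_derivative p1 p (\<Sum>n\<in>H. y n) \<in> Q" unfolding Q_def by blast
        then show "b + pet_derivative p1 p (\<Sum>n\<in>H. y n) (\<Sum>n\<in>H0. y n) + w \<in> W'' \<and>
            c (b + pet_derivative p1 p (\<Sum>n\<in>H. y n) (\<Sum>n\<in>H0. y n) + w) = c (b + w)"
          using b W''[of _ w "{}"] \<open>w \<in> W\<close> \<open>p1 0 = 0\<close> unfolding h by simp
      qed
    qed
  qed
qed

lemma focusing_imp_polynomial_vdW:
  assumes "\<And>s. focusing P p1 s"
  shows "polynomial_vdW P"
  unfolding polynomial_vdW_def
proof (intro allI)
  fix y r
  obtain N W where "finite W"
    and foc: "\<forall>c. (\<forall>u. c u < r) \<longrightarrow> mono_pattern P y N W c \<or> focused_pattern P p1 y N W c r"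
    using assms[of r, unfolded focusing_def, THEN spec[of _ y], THEN spec[of _ r]] by blast
  moreover have "mono_pattern P y N W c" if "\<forall>u. c u < r" for c
    using foc focused_pattern_impossible[OF that] that by blast
  ultimately show "\<exists>N W. finite W \<and> (\<forall>c. (\<forall>u. c u < r) \<longrightarrow> mono_pattern P y N W c)"
    by blast
qed

lemma polynomial_vdW_remove_zero:
  assumes "polynomial_vdW (P - {0})"
  shows "polynomial_vdW P"
  unfolding polynomial_vdW_def
proof (intro allI)
  fix y r
  obtain N W where "finite W"
    and mono: "\<forall>c. (\<forall>u. c u < r) \<longrightarrow> mono_pattern (P - {0}) y N W c"
    using assms[unfolded polynomial_vdW_def, THEN spec[of _ y], THEN spec[of _ r]] by blast
  moreover have "mono_pattern P y N W c" if "\<forall>u. c u < r" for c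
    using mono that by (blast intro: mono_pattern_remove_zero)
  ultimately show "\<exists>N W. finite W \<and> (\<forall>c. (\<forall>u. c u < r) \<longrightarrow> mono_pattern P y N W c)"
    by blast
qed

theorem pet_family_polynomial_vdW: "pet_family P \<Longrightarrow> polynomial_vdW P"
proof (induction "pet_weight P" arbitrary: P rule: less_induct)
  case less
  have "polynomial_vdW (P - {0})"
  proof (cases "P - {0} = {}")
    case True
    then show ?thesis
      unfolding polynomial_vdW_def mono_pattern_def by (intro allI exI[of _ 1] exI[of _ "{0}"]) auto
  next
    case False
    then obtain p1 where p1: "p1 \<in> P - {0}" and min: "\<And>p. p \<in> P - {0} \<Longrightarrow> poly_deg p1 \<le> poly_deg p"
      using ex_has_least_nat[of "\<lambda>p. p \<in> P - {0}" _ poly_deg] by blast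
    have derived: "polynomial_vdW ((\<lambda>(p, x). pet_derivative p1 p x) ` ((P - {0}) \<times> X))" if "finite X" for X
      using less(1)[OF pet_weight_derived_less[OF less(2) p1 min that] pet_family_derived[OF less(2) p1 that]]
      unfolding pet_derived_family_def .
    have zero: "p 0 = 0" if "p \<in> P - {0}" for p
      using pet_family_nonzero[OF less(2) that] by simp
    have "focusing (P - {0}) p1 s" for s
    proof (induction s)
      case (Suc s)
      show ?case by (rule focusing_Suc[OF p1 _ _ Suc]) (erule zero, erule derived)
    qed (rule focusing_0)
    then show ?thesis by (rule focusing_imp_polynomial_vdW)
  qed
  then show ?case by (rule polynomial_vdW_remove_zero)
qed

lemma sum_fun_apply: "(\<Sum>n\<in>H. f n) i = (\<Sum>n\<in>H. f n i)"
  by (induction H rule: infinite_finite_induct) auto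

section \<open>Piecewise syndetic sets\<close>

lemma difference_group_UNIV_translate:
  fixes S :: "'a::ab_group_add set"
  assumes closed: "\<And>a b. a \<in> S \<Longrightarrow> b \<in> S \<Longrightarrow> a + b \<in> S"
    and diff: "difference_group S = UNIV" and "finite W"
  shows "\<exists>u\<in>S. \<forall>w\<in>W. u + w \<in> S"
  using \<open>finite W\<close>
proof (induction W rule: finite_induct)
  case empty
  show ?case using diff unfolding difference_group_def by blast
next
  case (insert w W)
  obtain u where u: "u \<in> S" "\<forall>w\<in>W. u + w \<in> S" using insert.IH by blast
  obtain s1 s2 where s: "s1 \<in> S" "s2 \<in> S" "w = s1 - s2"
    using diff unfolding difference_group_def by blast
  have "u + s2 + w = u + s1"
    using s(3) by simp
  then have "u + s2 + w \<in> S"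
    using closed[OF u(1) s(1)] by metis
  moreover have "u + s2 + w' \<in> S" if "w' \<in> W" for w'
    using closed[OF u(2)[rule_format, OF that] s(2)] by (simp add: algebra_simps)
  moreover have "u + s2 \<in> S" using closed u(1) s(2) .
  ultimately show ?case by blast
qed

text \<open>Colour \<open>w\<close> by the element \<open>t\<close> of the finite set \<open>G\<close> with \<open>t + (u + w + x) \<in> A\<close>;
  the translate \<open>u\<close> moves the finite window into \<open>S\<close>, where piecewise syndeticity applies.\<close>

lemma piecewise_syndetic_colouring:
  fixes S A :: "'a::ab_group_add set"
  assumes closed: "\<And>a b. a \<in> S \<Longrightarrow> b \<in> S \<Longrightarrow> a + b \<in> S"
    and "difference_group S = UNIV" "piecewise_syndetic S A"
  obtains r where "\<And>W. finite W \<Longrightarrow>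
    \<exists>c::'a \<Rightarrow> nat. (\<forall>w. c w < r) \<and> (\<forall>a\<in>W. \<exists>t. \<forall>v\<in>W. c v = c a \<longrightarrow> t + v \<in> A)"
proof -
  obtain G where "finite G" "G \<subseteq> S" and cover: "\<forall>F. finite F \<and> F \<subseteq> S \<longrightarrow>
      (\<exists>x\<in>S. (\<lambda>f. f + x) ` F \<subseteq> (\<Union>t\<in>G. left_translate_inv S t A))"
    using assms(3) unfolding piecewise_syndetic_def by (elim exE conjE)
  obtain enc :: "'a \<Rightarrow> nat" and r where enc: "enc ` G = {i. i < r}" "inj_on enc G"
    using finite_imp_inj_to_nat_seg[OF \<open>finite G\<close>] by (elim exE conjE)
  show thesis
  proof (rule that[of "Suc r"])
    fix W :: "'a set" assume W: "finite W"
    obtain u where "u \<in> S" "\<forall>w\<in>W. u + w \<in> S"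
      using difference_group_UNIV_translate[OF closed assms(2) W] by blast
    then have window: "finite ((\<lambda>w. u + w) ` W) \<and> (\<lambda>w. u + w) ` W \<subseteq> S"
      using W by blast
    obtain x where "(\<lambda>f. f + x) ` (\<lambda>w. u + w) ` W \<subseteq> (\<Union>t\<in>G. left_translate_inv S t A)"
      using cover[rule_format, OF window] by blast
    then have "\<forall>w\<in>W. \<exists>t. t \<in> G \<and> t + (u + w + x) \<in> A"
      unfolding left_translate_inv_def by blast
    then obtain T where T: "\<And>w. w \<in> W \<Longrightarrow> T w \<in> G \<and> T w + (u + w + x) \<in> A"
      by metis
    define c where "c w = (if w \<in> W then enc (T w) else 0)" for w
    have "enc (T w) < r" if "w \<in> W" for w
      using T[OF that] enc(1) by blast
    then have "\<forall>w. c w < Suc r"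
      unfolding c_def by (simp add: less_Suc_eq) linarith
    moreover have "\<exists>t. \<forall>v\<in>W. c v = c a \<longrightarrow> t + v \<in> A" if "a \<in> W" for a
    proof (intro exI[of _ "T a + u + x"] ballI impI)
      fix v assume "v \<in> W" "c v = c a"
      then have "T v = T a"
        using enc(2) T that unfolding c_def by (simp add: inj_on_eq_iff)
      then show "T a + u + x + v \<in> A"
        using T[OF \<open>v \<in> W\<close>] by (simp add: algebra_simps)
    qed
    ultimately show "\<exists>c::'a \<Rightarrow> nat. (\<forall>w. c w < Suc r) \<and> (\<forall>a\<in>W. \<exists>t. \<forall>v\<in>W. c v = c a \<longrightarrow> t + v \<in> A)"
      by blast
  qed
qed

lemma piecewise_syndetic_polynomial_vdW:
  fixes S A :: "'a::ab_group_add set" and P :: "('v::ab_group_add \<Rightarrow> 'a) set" and y :: "nat \<Rightarrow> 'v"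
  assumes closed: "\<And>a b. a \<in> S \<Longrightarrow> b \<in> S \<Longrightarrow> a + b \<in> S"
    and "difference_group S = UNIV" "A \<subseteq> S" "piecewise_syndetic S A" "polynomial_vdW P"
  shows "\<exists>a\<in>S. \<exists>H. finite H \<and> H \<noteq> {} \<and> (\<forall>p\<in>P. a + p (\<Sum>n\<in>H. y n) \<in> A)"
proof -
  obtain r where colouring: "\<And>W. finite W \<Longrightarrow>
      \<exists>c::'a \<Rightarrow> nat. (\<forall>w. c w < r) \<and> (\<forall>a\<in>W. \<exists>t. \<forall>v\<in>W. c v = c a \<longrightarrow> t + v \<in> A)"
    using piecewise_syndetic_colouring[OF closed assms(2,4)] by blast
  obtain N W where W: "finite W" and mono: "\<forall>c. (\<forall>u. c u < r) \<longrightarrow> mono_pattern P y N W c"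
    using assms(5)[unfolded polynomial_vdW_def, THEN spec[of _ y], THEN spec[of _ r]] by blast
  obtain c where "\<forall>w. c w < r" and classes: "\<forall>a\<in>W. \<exists>t. \<forall>v\<in>W. c v = c a \<longrightarrow> t + v \<in> A"
    using colouring[OF W] by blast
  with mono have "mono_pattern P y N W c" by blast
  then obtain a H where "H \<subseteq> {..<N}" "H \<noteq> {}" "a \<in> W"
    and a: "\<forall>p\<in>P. a + p (\<Sum>n\<in>H. y n) \<in> W \<and> c (a + p (\<Sum>n\<in>H. y n)) = c a"
    unfolding mono_pattern_def by (elim exE conjE)
  obtain t where t: "\<forall>v\<in>W. c v = c a \<longrightarrow> t + v \<in> A"
    using classes \<open>a \<in> W\<close> by blast
  have "t + a \<in> S"
    using t \<open>a \<in> W\<close> assms(3) by blast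
  moreover have "t + a + p (\<Sum>n\<in>H. y n) \<in> A" if "p \<in> P" for p
    using t a that by (simp add: add.assoc)
  moreover have "finite H"
    using \<open>H \<subseteq> {..<N}\<close> finite_subset by blast
  ultimately show ?thesis
    using \<open>H \<noteq> {}\<close> by blast
qed

theorem corollary4p2:
  fixes S :: "'a::idom set" and A :: "'a set" and j :: nat
    and R :: "((nat \<Rightarrow> 'a) \<Rightarrow> 'a) set" and y :: "nat \<Rightarrow> nat \<Rightarrow> 'a"
  assumes "comm_semigroup_no_identity S"
    and "difference_group S = UNIV"
    and "j \<ge> 1"
    and "finite R" and "R \<noteq> {}" and "\<forall>f\<in>R. integral_poly j f"
    and "A \<subseteq> S" and "piecewise_syndetic S A"
    and "\<forall>n\<ge>1. \<forall>i<j. y n i \<in> S"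
  shows "\<exists>a\<in>S. \<exists>H. finite H \<and> H \<noteq> {} \<and> H \<subseteq> {n. n \<ge> 1} \<and>
           (\<forall>f\<in>R. a + f (\<lambda>i. \<Sum>n\<in>H. y n i) \<in> A)"
proof -
  have closed: "\<And>a b. a \<in> S \<Longrightarrow> b \<in> S \<Longrightarrow> a + b \<in> S"
    using assms(1) unfolding comm_semigroup_no_identity_def by blast
  have "pet_family R"
    using assms(4,6) integral_poly_polynomial_map unfolding pet_family_def by blast
  then have "polynomial_vdW R" by (rule pet_family_polynomial_vdW)
  from piecewise_syndetic_polynomial_vdW[OF closed assms(2,7,8) this, of "\<lambda>m. y (Suc m)"]
  obtain a H where "a \<in> S" "finite H" "H \<noteq> {}"
    and a: "\<forall>f\<in>R. a + f (\<Sum>m\<in>H. y (Suc m)) \<in> A"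
    by blast
  have "(\<Sum>m\<in>H. y (Suc m)) = (\<lambda>i. \<Sum>n\<in>Suc ` H. y n i)"
    by (simp add: fun_eq_iff sum_fun_apply sum.reindex)
  then show ?thesis
    using \<open>a \<in> S\<close> \<open>finite H\<close> \<open>H \<noteq> {}\<close> a by (intro bexI[of _ a] exI[of _ "Suc ` H"]) auto
qed

end
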